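(* Let $t>0$ and $u\ge 0$. For any $\phi\in C([0,t+u];\mathbb{R})$, \[ \mathcal{T}^t\bigl(\mathcal{T}^{t+u}(\phi)\bigr)(s)=\mathbb{T}^t_{\phi_t+\mathcal{T}^{t+u}(\phi)(t)}(\phi)(s),\qquad 0\le s\le t, \] where on both sides the transformations of duration $t$ act on the restrictions to $[0,t]$ of the paths.
   Context: For $r>0$ and $\psi\in C([0,r];\mathbb{R})$ let $A_s(\psi)=\int_0^s e^{2\psi_v}\,dv$. For $z\in\mathbb{R}$, $\mathbb{T}^r_z(\psi)(s)=\psi_s-\log\{1+\frac{A_s(\psi)}{A_r(\psi)}(e^z-1)\}$, $0\le s\le r$, and $\mathcal{T}^r(\psi)(s)=\mathbb{T}^r_{2\psi_r}(\psi)(s)$, $0\le s\le r$. *)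

theory Defs
  imports "HOL-Analysis.Analysis"
begin

text \<open>Paths on [0,r] are represented as functions real => real; only their values
on [0,r] matter for the definitions below (so restriction to [0,t] is implicit).\<close>

definition Aint :: "(real \<Rightarrow> real) \<Rightarrow> real \<Rightarrow> real" where
  "Aint \<psi> s = integral {0..s} (\<lambda>v. exp (2 * \<psi> v))"

definition TT :: "real \<Rightarrow> real \<Rightarrow> (real \<Rightarrow> real) \<Rightarrow> real \<Rightarrow> real" where
  "TT r z \<psi> s = \<psi> s - ln (1 + Aint \<psi> s / Aint \<psi> r * (exp z - 1))"

definition Tcal :: "real \<Rightarrow> (real \<Rightarrow> real) \<Rightarrow> real \<Rightarrow> real" where
  "Tcal r \<psi> s = TT r (2 * \<psi> r) \<psi> s"

end

(*
  Write q = 1 + c A for the denominator of TT r z \<psi>, where A = Aint \<psi> and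
  c = (exp z - 1) / A r. Then exp (2 TT r z \<psi>) = A' / q^2, and since q' = c A' the
  quotient A / q has exactly this derivative; hence Aint (TT r z \<psi>) = A / q.
  Substituting this into the definition of TT gives the composition law
  TT t w (TT r z \<psi>) = TT t (w + ln (q t)) \<psi> on [0,t], where ln (q t) = \<psi> t - TT r z \<psi> t.
  For w = 2 Tcal r \<psi> t the new parameter is \<psi> t + Tcal r \<psi> t.
*)

theory Submission
  imports Defs
begin

definition TT_denom :: "real \<Rightarrow> real \<Rightarrow> (real \<Rightarrow> real) \<Rightarrow> real \<Rightarrow> real" where
  "TT_denom r z \<psi> s = 1 + Aint \<psi> s / Aint \<psi> r * (exp z - 1)"

lemma TT_eq_minus_ln_denom: "TT r z \<psi> s = \<psi> s - ln (TT_denom r z \<psi> s)"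
  unfolding TT_def TT_denom_def ..

lemma Aint_nonneg: "0 \<le> Aint \<psi> s"
proof (cases "(\<lambda>v. exp (2 * \<psi> v)) integrable_on {0..s}")
  case True
  then show ?thesis unfolding Aint_def by (intro integral_nonneg) auto
next
  case False
  then show ?thesis unfolding Aint_def by (simp add: not_integrable_integral)
qed

lemma Aint_mono:
  assumes "continuous_on {0..y} \<psi>" "0 \<le> x" "x \<le> y"
  shows "Aint \<psi> x \<le> Aint \<psi> y"
proof -
  have "(\<lambda>v. exp (2 * \<psi> v)) integrable_on {0..w}" if "w \<le> y" for w
    using that assms(1)
    by (intro integrable_continuous_real continuous_intros) (auto elim: continuous_on_subset)
  then show ?thesis
    unfolding Aint_def using assms(2,3) by (intro integral_subset_le) auto
qed

lemma Aint_has_real_derivative: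
  assumes "continuous_on {0..r} \<psi>" "y \<in> {0..r}"
  shows "(Aint \<psi> has_real_derivative exp (2 * \<psi> y)) (at y within {0..r})"
proof -
  have "continuous_on {0..r} (\<lambda>v. exp (2 * \<psi> v))"
    using assms(1) by (intro continuous_intros)
  from integral_has_vector_derivative[OF this assms(2)] show ?thesis
    unfolding Aint_def has_real_derivative_iff_has_vector_derivative .
qed

lemma one_add_mult_diff_one_pos:
  fixes l e :: real
  assumes "0 \<le> l" "l \<le> 1" "0 < e"
  shows "0 < 1 + l * (e - 1)"
proof -
  have "1 + l * (e - 1) = (1 - l) + l * e" by algebra
  moreover have "0 < (1 - l) + l * e"
    using assms by (cases "l = 1") (auto intro: add_nonneg_pos add_pos_nonneg)
  ultimately show ?thesis by simp
qed

lemma TT_denom_pos: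
  assumes "continuous_on {0..r} \<psi>" "s \<in> {0..r}"
  shows "0 < TT_denom r z \<psi> s"
proof -
  have "Aint \<psi> s \<le> Aint \<psi> r" using Aint_mono assms by auto
  then have "Aint \<psi> s / Aint \<psi> r \<le> 1"
    using Aint_nonneg[of \<psi> s] by (cases "Aint \<psi> r = 0") auto
  then show ?thesis unfolding TT_denom_def
    by (intro one_add_mult_diff_one_pos) (auto simp: Aint_nonneg)
qed

lemma exp_double_TT:
  assumes "0 < TT_denom r z \<psi> s"
  shows "exp (2 * TT r z \<psi> s) = exp (2 * \<psi> s) / (TT_denom r z \<psi> s)\<^sup>2"
  using assms by (simp add: TT_eq_minus_ln_denom right_diff_distrib exp_diff exp_double)

lemma Aint_TT:
  assumes "continuous_on {0..r} \<psi>" "s \<in> {0..r}"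
  shows "Aint (TT r z \<psi>) s = Aint \<psi> s / TT_denom r z \<psi> s"
proof -
  define q where "q = TT_denom r z \<psi>"
  define c where "c = (exp z - 1) / Aint \<psi> r"
  define f where "f v = exp (2 * \<psi> v)" for v
  have q_eq: "q = (\<lambda>y. 1 + c * Aint \<psi> y)"
    unfolding q_def c_def TT_denom_def by auto
  have q_pos: "0 < q y" if "y \<in> {0..r}" for y
    unfolding q_def using TT_denom_pos[OF assms(1) that] .
  have "((\<lambda>y. Aint \<psi> y / q y) has_vector_derivative f y / (q y)\<^sup>2) (at y within {0..s})"
    if y: "y \<in> {0..s}" for y
  proof -
    have yr: "y \<in> {0..r}" using y assms(2) by auto
    have dA: "(Aint \<psi> has_real_derivative f y) (at y within {0..r})"
      unfolding f_def using Aint_has_real_derivative[OF assms(1) yr] .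
    have "((\<lambda>y. Aint \<psi> y / q y) has_real_derivative
        (f y * q y - Aint \<psi> y * (c * f y)) / (q y * q y)) (at y within {0..r})"
      using q_pos[OF yr] unfolding q_eq
      by (intro derivative_eq_intros dA refl) (auto intro: dA)
    moreover have "(f y * q y - Aint \<psi> y * (c * f y)) / (q y * q y) = f y / (q y)\<^sup>2"
      unfolding q_eq by (simp add: power2_eq_square algebra_simps)
    ultimately have "((\<lambda>y. Aint \<psi> y / q y) has_real_derivative f y / (q y)\<^sup>2)
        (at y within {0..s})"
      using y assms(2) by (auto intro: DERIV_subset)
    then show ?thesis unfolding has_real_derivative_iff_has_vector_derivative .
  qed
  then have "((\<lambda>y. f y / (q y)\<^sup>2) has_integral Aint \<psi> s / q s - Aint \<psi> 0 / q 0) {0..s}"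
    using assms(2) by (intro fundamental_theorem_of_calculus) auto
  moreover have "Aint \<psi> 0 = 0" by (simp add: Aint_def)
  ultimately have "integral {0..s} (\<lambda>y. f y / (q y)\<^sup>2) = Aint \<psi> s / q s"
    by (simp add: integral_unique)
  moreover have "integral {0..s} (\<lambda>v. exp (2 * TT r z \<psi> v)) = integral {0..s} (\<lambda>y. f y / (q y)\<^sup>2)"
    using assms(2) q_pos by (intro integral_cong) (auto simp: exp_double_TT q_def f_def)
  ultimately show ?thesis unfolding Aint_def q_def by simp
qed

lemma TT_denom_TT:
  assumes "continuous_on {0..r} \<psi>" "t \<le> r" "s \<in> {0..t}"
  shows "TT_denom r z \<psi> s * TT_denom t w (TT r z \<psi>) s
    = TT_denom t (w + \<psi> t - TT r z \<psi> t) \<psi> s"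
proof -
  define a b c where "a = Aint \<psi> s" and "b = Aint \<psi> t" and "c = (exp z - 1) / Aint \<psi> r"
  define p q where "p = TT_denom r z \<psi> t" and "q = TT_denom r z \<psi> s"
  have p_eq: "p = 1 + c * b" and q_eq: "q = 1 + c * a"
    unfolding p_def q_def TT_denom_def a_def b_def c_def by simp_all
  have "0 < p" "0 < q"
    unfolding p_def q_def using TT_denom_pos[OF assms(1)] assms(2,3) by auto
  have "w + \<psi> t - TT r z \<psi> t = w + ln p"
    unfolding TT_eq_minus_ln_denom p_def by simp
  then have exp_shift: "exp (w + \<psi> t - TT r z \<psi> t) = exp w * p"
    using \<open>0 < p\<close> by (simp only: exp_add exp_ln)
  have A_TT: "Aint (TT r z \<psi>) s = a / q" "Aint (TT r z \<psi>) t = b / p"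
    using Aint_TT[OF assms(1)] assms(2,3) unfolding p_def q_def a_def b_def by auto
  have "continuous_on {0..t} \<psi>"
    using assms(2) by (intro continuous_on_subset[OF assms(1)]) auto
  then have "0 \<le> a" "a \<le> b"
    unfolding a_def b_def using Aint_nonneg Aint_mono assms(3) by auto
  then consider "b = 0" "a = 0" | "0 < b" by fastforce
  then have "q * (1 + a / q / (b / p) * (exp w - 1)) = 1 + a / b * (exp w * p - 1)"
  proof cases
    case 1
    \<comment> \<open>both sides equal 1, by the convention \<open>x / 0 = 0\<close>\<close>
    then show ?thesis unfolding q_eq by simp
  next
    case 2
    have "q * (1 + a / q / (b / p) * (exp w - 1)) = q + a / b * (exp w * p - p)"
      using 2 \<open>0 < p\<close> \<open>0 < q\<close> by (simp add: field_simps)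
    also have "\<dots> = 1 + a / b * (exp w * p - 1)"
      using 2 unfolding p_eq q_eq by (simp add: field_simps)
    finally show ?thesis .
  qed
  then show ?thesis
    unfolding TT_denom_def[of t] A_TT exp_shift a_def[symmetric] b_def[symmetric] q_def .
qed

lemma TT_TT:
  assumes "continuous_on {0..r} \<psi>" "t \<le> r" "s \<in> {0..t}"
  shows "TT t w (TT r z \<psi>) s = TT t (w + \<psi> t - TT r z \<psi> t) \<psi> s"
proof -
  have "0 < TT_denom r z \<psi> s"
    using TT_denom_pos[OF assms(1)] assms(2,3) by auto
  moreover have "0 < TT_denom r z \<psi> s * TT_denom t w (TT r z \<psi>) s"
    unfolding TT_denom_TT[OF assms]
    using assms by (intro TT_denom_pos) (auto elim: continuous_on_subset)
  ultimately have "0 < TT_denom t w (TT r z \<psi>) s"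
    by (simp add: zero_less_mult_iff)
  with \<open>0 < TT_denom r z \<psi> s\<close> show ?thesis
    unfolding TT_eq_minus_ln_denom[of t] TT_eq_minus_ln_denom[of r z \<psi> s]
      TT_denom_TT[OF assms, symmetric]
    by (simp add: ln_mult)
qed

theorem proposition2p4:
  fixes t u :: real and \<phi> :: "real \<Rightarrow> real"
  assumes "t > 0" and "u \<ge> 0"
    and "continuous_on {0..t+u} \<phi>"
  shows "\<forall>s\<in>{0..t}. Tcal t (Tcal (t+u) \<phi>) s = TT t (\<phi> t + Tcal (t+u) \<phi> t) \<phi> s"
proof
  fix s assume "s \<in> {0..t}"
  with assms(2,3) have "TT t (2 * Tcal (t+u) \<phi> t) (Tcal (t+u) \<phi>) s
      = TT t (2 * Tcal (t+u) \<phi> t + \<phi> t - Tcal (t+u) \<phi> t) \<phi> s"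
    unfolding Tcal_def by (intro TT_TT) auto
  then show "Tcal t (Tcal (t+u) \<phi>) s = TT t (\<phi> t + Tcal (t+u) \<phi> t) \<phi> s"
    by (simp add: Tcal_def[of t] algebra_simps)
qed

end
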